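(* Let $f:\mathbb{R}^N\times\mathbb{R}\to\mathbb{R}^N$ be $C^1$ with $f(x,t+T)=f(x,t)$ for all $x,t$, for some $T>0$, and let $x_\ast$ be a $T$-periodic (not necessarily minimal period) solution of $\dot x(t)=f(x(t),t)$. Let $K\in\mathbb{R}^{N\times N}$ be arbitrary. Then the geometric multiplicity of $1$ as an eigenvalue of the monodromy matrix $Y_0(T)$ of the uncontrolled linearization $\dot y(t)=\partial_x f(x_\ast(t),t)y(t)$ equals the geometric multiplicity of $1$ as an eigenvalue of the monodromy operator $Y_1(T)$ of the controlled linearization $\dot y(t)=\partial_x f(x_\ast(t),t)y(t)+K[y(t)-y(t-T)]$. (By convention the geometric multiplicity is $0$ if $1$ is not an eigenvalue.)
   Context: For a $T$-periodic continuous matrix function $A(t)$, $Y_0(t)\in\mathbb{R}^{N\times N}$ denotes the fundamental solution of $\dot y=A(t)y$ with $Y_0(0)=I$; $Y_0(T)$ is the monodromy matrix, its eigenvalues are the Floquet multipliers, and the geometric multiplicity of an eigenvalue $\mu$ is $\dim\{x\in\mathbb{C}^N:\mu x=Y_0(T)x\}$. For the delay equation $\dot y(t)=A(t)y(t)+K[y(t)-y(t-T)]$, for $\phi\in C([-T,0],\mathbb{C}^N)$ let $y^\phi$ be the unique solution on $[-T,\infty)$ with $y^\phi=\phi$ on $[-T,0]$, and set $(Y_1(t)\phi)(\theta)=y^\phi(t+\theta)$, $\theta\in[-T,0]$. The monodromy operator is $Y_1(T)$ acting on $C([-T,0],\mathbb{C}^N)$; its nonzero eigenvalues are the Floquet multipliers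 of the delay equation, and the geometric multiplicity of an eigenvalue $\mu$ is $\dim\{\phi: \mu\phi=Y_1(T)\phi\}$. *)

theory Defs
  imports "HOL-Analysis.Analysis" "HOL-Library.Function_Algebras"
begin

definition cmat :: "real^'n^'m \<Rightarrow> complex^'n^'m" where
  "cmat M = (\<chi> i j. complex_of_real (M $ i $ j))"

definition fundamental_solution :: "(real \<Rightarrow> real^'n^'n) \<Rightarrow> real \<Rightarrow> real^'n^'n" where
  "fundamental_solution A = (THE Y. Y 0 = mat 1 \<and>
      (\<forall>t. (Y has_vector_derivative (A t ** Y t)) (at t)))"

definition monodromy_matrix :: "(real \<Rightarrow> real^'n^'n) \<Rightarrow> real \<Rightarrow> real^'n^'n" where
  "monodromy_matrix A T = fundamental_solution A T"

text \<open>y is a solution on [-T, infinity) of y'(t) = A(t) y(t) + K (y(t) - y(t-T)) with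
  initial history phi on [-T,0] (right derivative at t = 0). Values outside [-T,inf) are
  normalised to 0 so that the solution is a unique function.\<close>
definition dde_solution ::
  "(real \<Rightarrow> real^'n^'n) \<Rightarrow> real^'n^'n \<Rightarrow> real \<Rightarrow> (real \<Rightarrow> complex^'n) \<Rightarrow> (real \<Rightarrow> complex^'n) \<Rightarrow> bool"
  where
  "dde_solution A K T \<phi> y \<longleftrightarrow>
     (\<forall>t. t < -T \<longrightarrow> y t = 0) \<and>
     continuous_on {-T..} y \<and>
     (\<forall>\<theta>\<in>{-T..0}. y \<theta> = \<phi> \<theta>) \<and>
     (\<forall>t\<ge>0. (y has_vector_derivative
         (cmat (A t) *v y t + cmat K *v (y t - y (t - T)))) (at t within {0..}))"

definition dde_sol :: "(real \<Rightarrow> real^'n^'n) \<Rightarrow> real^'n^'n \<Rightarrow> real \<Rightarrow> (real \<Rightarrow> complex^'n) \<Rightarrow> real \<Rightarrow> complex^'n"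
  where "dde_sol A K T \<phi> = (THE y. dde_solution A K T \<phi> y)"

definition dde_solution_operator ::
  "(real \<Rightarrow> real^'n^'n) \<Rightarrow> real^'n^'n \<Rightarrow> real \<Rightarrow> real \<Rightarrow> (real \<Rightarrow> complex^'n) \<Rightarrow> (real \<Rightarrow> complex^'n)"
  where "dde_solution_operator A K T t \<phi> =
     (\<lambda>\<theta>. if \<theta> \<in> {-T..0} then dde_sol A K T \<phi> (t + \<theta>) else 0)"

definition phase_space :: "real \<Rightarrow> (real \<Rightarrow> complex^'n) set" where
  "phase_space T = {\<phi>. continuous_on {-T..0} \<phi> \<and> (\<forall>\<theta>. \<theta> \<notin> {-T..0} \<longrightarrow> \<phi> \<theta> = 0)}"

definition fscale :: "complex \<Rightarrow> (real \<Rightarrow> complex^'n) \<Rightarrow> (real \<Rightarrow> complex^'n)" where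
  "fscale c \<phi> = (\<lambda>\<theta>. c *s \<phi> \<theta>)"

definition matrix_eigenspace :: "real^'n^'n \<Rightarrow> complex \<Rightarrow> (complex^'n) set" where
  "matrix_eigenspace M \<mu> = {x. \<mu> *s x = cmat M *v x}"

definition operator_eigenspace ::
  "real \<Rightarrow> ((real \<Rightarrow> complex^'n) \<Rightarrow> (real \<Rightarrow> complex^'n)) \<Rightarrow> complex \<Rightarrow> (real \<Rightarrow> complex^'n) set" where
  "operator_eigenspace T U \<mu> = {\<phi>\<in>phase_space T. fscale \<mu> \<phi> = U \<phi>}"

definition geom_mult_matrix :: "real^'n^'n \<Rightarrow> complex \<Rightarrow> nat" where
  "geom_mult_matrix M \<mu> = vec.dim (matrix_eigenspace M \<mu>)"

definition geom_mult_operator ::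
  "real \<Rightarrow> ((real \<Rightarrow> complex^'n) \<Rightarrow> (real \<Rightarrow> complex^'n)) \<Rightarrow> complex \<Rightarrow> nat" where
  "geom_mult_operator T U \<mu> = vector_space.dim fscale (operator_eigenspace T U \<mu>)"

end

(* An eigenfunction phi of the monodromy operator Y1(T) with multiplier 1 is the history of a
   solution y of the delay equation with y(t + T) = y(t).  Along such a solution the control term
   K [y(t) - y(t - T)] vanishes, so y solves the undelayed linearization: y(t) = Y0(t) y(0) with
   Y0(T) y(0) = y(0).  Conversely, if Y0(T) v = v, periodicity of A gives
   Y0(t + T) v = Y0(t) Y0(T) v = Y0(t) v, so t -> Y0(t) v solves the delay equation and its history
   theta -> Y0(theta) v is fixed by Y1(T).  Hence v -> (theta -> Y0(theta) v) is an injective linear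
   map from the eigenspace of Y0(T) onto that of Y1(T), and the multiplicities agree.

   Identifying Y1(T) needs existence and uniqueness for the delay equation.  Both come from the
   method of steps: on each interval of length T the delayed term is already known, and the
   equation is solved by variation of constants for y' = (A + K) y - K y(t - T). *)

theory Submission
  imports Defs
begin

lemma bounded_bilinear_matrix_matrix_mult:
  "bounded_bilinear ((**) :: 'a::{euclidean_space,real_algebra_1}^'n^'m \<Rightarrow> 'a^'k^'n \<Rightarrow> 'a^'k^'m)"
proof -
  have "bilinear ((**) :: 'a^'n^'m \<Rightarrow> 'a^'k^'n \<Rightarrow> 'a^'k^'m)"
    unfolding bilinear_def
    by (auto intro!: linearI simp: vec_eq_iff matrix_matrix_mult_def sum.distrib
        distrib_left distrib_right scaleR_sum_right)
  then show ?thesis by (simp add: bilinear_conv_bounded_bilinear)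
qed

lemma bounded_bilinear_matrix_vector_mult:
  "bounded_bilinear ((*v) :: 'a::{euclidean_space,real_algebra_1}^'n^'m \<Rightarrow> 'a^'n \<Rightarrow> 'a^'m)"
proof -
  have "bilinear ((*v) :: 'a^'n^'m \<Rightarrow> 'a^'n \<Rightarrow> 'a^'m)"
    unfolding bilinear_def
    by (auto intro!: linearI simp: vec_eq_iff matrix_vector_mult_def sum.distrib
        distrib_left distrib_right scaleR_sum_right)
  then show ?thesis by (simp add: bilinear_conv_bounded_bilinear)
qed

lemma bounded_linear_cmat: "bounded_linear (cmat :: real^'n^'m \<Rightarrow> complex^'n^'m)"
proof -
  have "linear (cmat :: real^'n^'m \<Rightarrow> complex^'n^'m)"
    by (rule linearI) (simp_all add: cmat_def vec_eq_iff, simp add: scaleR_conv_of_real)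
  then show ?thesis by (simp add: linear_conv_bounded_linear)
qed

lemma cmat_mult: "cmat (A ** B) = cmat A ** cmat B"
  by (simp add: cmat_def vec_eq_iff matrix_matrix_mult_def)

lemma cmat_mat_1: "cmat (mat 1) = mat 1"
  by (simp add: cmat_def vec_eq_iff mat_def)

lemma cmat_add: "cmat (A + B) = cmat A + cmat B"
  by (simp add: cmat_def vec_eq_iff)

lemma cmat_uminus: "cmat (- A) = - cmat A"
  by (simp add: cmat_def vec_eq_iff)

lemma cmat_mult_inverse_cancel:
  assumes "Y ** W = mat 1"
  shows "cmat Y *v (cmat W *v x) = x"
  by (simp add: matrix_vector_mul_assoc cmat_mult[symmetric] assms cmat_mat_1)

lemma at_within_Icc_eq_atLeast:
  fixes a b t :: real
  assumes "a \<le> t" "t < b"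
  shows "at t within {a..b} = at t within {a..}"
  by (rule at_within_nhd[of _ "{t - 1 <..< b}"]) (use assms in auto)

lemma continuous_on_atLeastI:
  fixes a :: real
  assumes "\<And>b. b > a \<Longrightarrow> continuous_on {a..b} f"
  shows "continuous_on {a..} f"
  unfolding continuous_on_eq_continuous_within
proof
  fix t assume t: "t \<in> {a..}"
  then have "continuous (at t within {a..t+1}) f"
    using assms[of "t+1"] by (auto simp: continuous_on_eq_continuous_within)
  then show "continuous (at t within {a..}) f"
    using at_within_Icc_eq_atLeast[of a t "t+1"] t by simp
qed

lemma has_vector_derivative_within_Un:
  assumes "(f has_vector_derivative D) (at x within S)" "(f has_vector_derivative D) (at x within T)"
  shows "(f has_vector_derivative D) (at x within S \<union> T)"
  using assms unfolding has_vector_derivative_def has_derivative_within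
  by (auto simp: at_within_union intro: filterlim_sup)

section \<open>Linear matrix differential equations\<close>

primrec picard_iterate :: "(real \<Rightarrow> real^'n^'n) \<Rightarrow> nat \<Rightarrow> real \<Rightarrow> real^'n^'n" where
  "picard_iterate B 0 = (\<lambda>t. mat 1)"
| "picard_iterate B (Suc k) = (\<lambda>t. integral {0..t} (\<lambda>s. B s ** picard_iterate B k s))"

definition picard_limit :: "(real \<Rightarrow> real^'n^'n) \<Rightarrow> real \<Rightarrow> real^'n^'n" where
  "picard_limit B t = (\<Sum>k. picard_iterate B k t)"

lemma continuous_on_picard_iterate:
  assumes "continuous_on {0..R} B"
  shows "continuous_on {0..R} (picard_iterate B k)"
proof (induction k)
  case (Suc k)
  have "continuous_on {0..R} (\<lambda>s. B s ** picard_iterate B k s)"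
    using bounded_bilinear.continuous_on[OF bounded_bilinear_matrix_matrix_mult assms Suc] .
  then show ?case
    by (simp add: indefinite_integral_continuous_1 integrable_continuous_real)
qed simp

lemma has_integral_monomial:
  fixes C t :: real
  assumes "0 \<le> t"
  shows "((\<lambda>s. C * s^k / fact k) has_integral C * t^Suc k / fact (Suc k)) {0..t}"
proof -
  have "((\<lambda>s. C * s^Suc k / fact (Suc k)) has_vector_derivative C * s^k / fact k) (at s within {0..t})" for s
  proof -
    have "((\<lambda>s. C * s^Suc k / fact (Suc k)) has_real_derivative
        C * (real (Suc k) * s^k) / fact (Suc k)) (at s within {0..t})"
      by (intro derivative_eq_intros) auto
    moreover have "C * (real (Suc k) * s^k) / fact (Suc k) = C * s^k / fact k"
      by (simp add: fact_Suc field_simps del: of_nat_Suc)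
    ultimately show ?thesis by (simp add: has_real_derivative_iff_has_vector_derivative)
  qed
  from fundamental_theorem_of_calculus[OF assms this] show ?thesis by simp
qed

lemma norm_picard_iterate_le:
  fixes B :: "real \<Rightarrow> real^'n^'n"
  assumes B: "continuous_on {0..R} B" "\<And>s. s \<in> {0..R} \<Longrightarrow> norm (B s) \<le> M" "M \<ge> 0"
    and C: "\<And>(X :: real^'n^'n) (Z :: real^'n^'n). norm (X ** Z) \<le> norm X * norm Z * C" "C > 0"
    and t: "t \<in> {0..R}"
  shows "norm (picard_iterate B k t) \<le> norm (mat 1 :: real^'n^'n) * (C * M)^k * t^k / fact k"
  using t
proof (induction k arbitrary: t)
  case (Suc k)
  let ?c = "norm (mat 1 :: real^'n^'n)"
  have t: "0 \<le> t" "t \<le> R" using Suc.prems by auto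
  have cont: "continuous_on {0..t} (\<lambda>s. B s ** picard_iterate B k s)"
    using bounded_bilinear.continuous_on[OF bounded_bilinear_matrix_matrix_mult B(1)
        continuous_on_picard_iterate[OF B(1)]]
    by (rule continuous_on_subset) (use t in auto)
  have "norm (picard_iterate B (Suc k) t)
      \<le> integral {0..t} (\<lambda>s. (C * M) * (?c * (C * M)^k) * s^k / fact k)"
    unfolding picard_iterate.simps
  proof (rule integral_norm_bound_integral)
    show "(\<lambda>s. B s ** picard_iterate B k s) integrable_on {0..t}"
      using cont by (rule integrable_continuous_real)
    show "(\<lambda>s. (C * M) * (?c * (C * M)^k) * s^k / fact k) integrable_on {0..t}"
      using has_integral_monomial[OF t(1)] by blast
    fix s assume s: "s \<in> {0..t}"
    have "norm (B s ** picard_iterate B k s) \<le> norm (B s) * norm (picard_iterate B k s) * C"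
      by (rule C(1))
    also have "\<dots> \<le> M * (?c * (C * M)^k * s^k / fact k) * C"
      using s t B(2,3) Suc.IH[of s] C(2) by (intro mult_right_mono mult_mono) auto
    finally show "norm (B s ** picard_iterate B k s) \<le> (C * M) * (?c * (C * M)^k) * s^k / fact k"
      by (simp add: field_simps)
  qed
  also have "\<dots> = (C * M) * (?c * (C * M)^k) * t^Suc k / fact (Suc k)"
    using has_integral_monomial[OF t(1)] by (rule integral_unique)
  finally show ?case by (simp add: field_simps)
qed simp

lemma picard_uniform_limit:
  fixes B :: "real \<Rightarrow> real^'n^'n"
  assumes B: "continuous_on {0..R} B"
  shows "uniform_limit {0..R} (\<lambda>n t. \<Sum>k<n. picard_iterate B k t) (picard_limit B) sequentially"
proof -
  obtain C where C: "\<And>(X :: real^'n^'n) (Z :: real^'n^'n). norm (X ** Z) \<le> norm X * norm Z * C" "C > 0"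
    using bounded_bilinear.pos_bounded[OF bounded_bilinear_matrix_matrix_mult] by blast
  have "bounded (B ` {0..R})"
    using B by (intro compact_imp_bounded compact_continuous_image) auto
  then obtain M where M: "\<And>s. s \<in> {0..R} \<Longrightarrow> norm (B s) \<le> M" "M > 0"
    unfolding bounded_pos by (metis atLeastAtMost_iff image_eqI)
  let ?c = "norm (mat 1 :: real^'n^'n)"
  show ?thesis
    unfolding picard_limit_def
  proof (rule Weierstrass_m_test)
    fix k t assume t: "t \<in> {0..R}"
    have "norm (picard_iterate B k t) \<le> ?c * (C * M)^k * t^k / fact k"
      using norm_picard_iterate_le[OF B M(1) less_imp_le[OF M(2)] C t] .
    also have "\<dots> \<le> ?c * (inverse (fact k) * (C * M * R)^k)"
      using t C M by (auto simp: field_simps power_mult_distrib intro!: mult_left_mono power_mono mult_right_mono)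
    finally show "norm (picard_iterate B k t) \<le> ?c * (inverse (fact k) * (C * M * R)^k)" .
  next
    show "summable (\<lambda>k. ?c * (inverse (fact k) * (C * M * R)^k))"
      by (intro summable_mult summable_exp)
  qed
qed

lemma continuous_on_picard_limit:
  fixes B :: "real \<Rightarrow> real^'n^'n"
  assumes "continuous_on {0..R} B"
  shows "continuous_on {0..R} (picard_limit B)"
  by (rule uniform_limit_theorem[OF _ picard_uniform_limit[OF assms]])
    (auto intro!: always_eventually continuous_on_sum continuous_on_picard_iterate[OF assms])

lemma picard_limit_integral_equation:
  fixes B :: "real \<Rightarrow> real^'n^'n"
  assumes B: "continuous_on {0..R} B" and t: "t \<in> {0..R}"
  shows "picard_limit B t = mat 1 + integral {0..t} (\<lambda>s. B s ** picard_limit B s)"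
proof -
  define S where "S n t = (\<Sum>k<n. picard_iterate B k t)" for n t
  have Bt: "continuous_on {0..t} B"
    using B by (rule continuous_on_subset) (use t in auto)
  have S_cont: "continuous_on {0..t} (S n)" for n
    unfolding S_def using continuous_on_picard_iterate[OF Bt] by (intro continuous_on_sum) auto
  have S_Suc: "S (Suc n) t = mat 1 + integral {0..t} (\<lambda>s. B s ** S n s)" for n
  proof -
    have "S (Suc n) t = mat 1 + (\<Sum>k<n. integral {0..t} (\<lambda>s. B s ** picard_iterate B k s))"
      unfolding S_def by (subst sum.lessThan_Suc_shift) simp
    also have "(\<Sum>k<n. integral {0..t} (\<lambda>s. B s ** picard_iterate B k s))
        = integral {0..t} (\<lambda>s. \<Sum>k<n. B s ** picard_iterate B k s)"
      by (rule integral_sum[symmetric]) (auto intro!: integrable_continuous_real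
          bounded_bilinear.continuous_on[OF bounded_bilinear_matrix_matrix_mult Bt]
          continuous_on_picard_iterate[OF Bt])
    finally show ?thesis
      unfolding S_def by (simp add: bounded_bilinear.sum_right[OF bounded_bilinear_matrix_matrix_mult])
  qed
  have U: "uniform_limit {0..t} S (picard_limit B) sequentially"
    unfolding S_def using picard_uniform_limit[OF Bt] .
  have "uniform_limit {0..t} (\<lambda>n s. B s ** S n s) (\<lambda>s. B s ** picard_limit B s) sequentially"
    by (rule bounded_bilinear.bounded_uniform_limit[OF bounded_bilinear_matrix_matrix_mult
          uniform_limit_const U])
      (auto intro!: compact_imp_bounded compact_continuous_image Bt continuous_on_picard_limit)
  then obtain I J where I: "\<And>n. ((\<lambda>s. B s ** S n s) has_integral I n) {0..t}"
    and J: "((\<lambda>s. B s ** picard_limit B s) has_integral J) {0..t}" and IJ: "I \<longlonglongrightarrow> J"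
    by (rule uniform_limit_integral)
      (auto intro!: bounded_bilinear.continuous_on[OF bounded_bilinear_matrix_matrix_mult Bt S_cont])
  have "(\<lambda>n. S (Suc n) t) \<longlonglongrightarrow> mat 1 + J"
    unfolding S_Suc using integral_unique[OF I] IJ by (simp add: tendsto_add)
  moreover have "(\<lambda>n. S (Suc n) t) \<longlonglongrightarrow> picard_limit B t"
    using tendsto_uniform_limitI[OF U] t by (intro LIMSEQ_Suc) simp
  ultimately show ?thesis
    using LIMSEQ_unique integral_unique[OF J] by metis
qed

lemma matrix_ode_exists_atLeast:
  fixes B :: "real \<Rightarrow> real^'n^'n"
  assumes B: "continuous_on {0..} B"
  shows "\<exists>Y. Y 0 = mat 1 \<and> (\<forall>t\<ge>0. (Y has_vector_derivative B t ** Y t) (at t within {0..}))"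
proof (intro exI conjI allI impI)
  show "picard_limit B 0 = mat 1"
    using picard_limit_integral_equation[of 0 B 0] by simp
  fix t :: real assume t: "t \<ge> 0"
  let ?R = "t + 1"
  have BR: "continuous_on {0..?R} B" using B by (rule continuous_on_subset) auto
  have "continuous_on {0..?R} (\<lambda>s. B s ** picard_limit B s)"
    by (rule bounded_bilinear.continuous_on[OF bounded_bilinear_matrix_matrix_mult BR
          continuous_on_picard_limit[OF BR]])
  from has_vector_derivative_add[OF has_vector_derivative_const integral_has_vector_derivative[OF this]]
  have "((\<lambda>u. mat 1 + integral {0..u} (\<lambda>s. B s ** picard_limit B s))
      has_vector_derivative B t ** picard_limit B t) (at t within {0..?R})"
    using t by simp
  then have "(picard_limit B has_vector_derivative B t ** picard_limit B t) (at t within {0..?R})"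
    by (rule has_vector_derivative_transform[rotated 2])
      (use t picard_limit_integral_equation[OF BR] in auto)
  then show "(picard_limit B has_vector_derivative B t ** picard_limit B t) (at t within {0..})"
    using at_within_Icc_eq_atLeast[of 0 t ?R] t by simp
qed

lemma matrix_ode_exists_atMost:
  fixes B :: "real \<Rightarrow> real^'n^'n"
  assumes B: "continuous_on {..0} B"
  shows "\<exists>Y. Y 0 = mat 1 \<and> (\<forall>t\<le>0. (Y has_vector_derivative B t ** Y t) (at t within {..0}))"
proof -
  have "continuous_on {0..} (\<lambda>s. - B (- s))"
    by (intro continuous_intros continuous_on_compose2[OF B]) auto
  then obtain Z where Z: "Z 0 = mat 1"
      "\<And>t. t \<ge> 0 \<Longrightarrow> (Z has_vector_derivative - B (- t) ** Z t) (at t within {0..})"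
    using matrix_ode_exists_atLeast by blast
  have "((\<lambda>s. Z (- s)) has_vector_derivative B t ** Z (- t)) (at t within {..0})" if "t \<le> 0" for t
  proof -
    have "(uminus has_vector_derivative -1) (at t within {..0})"
      by (rule derivative_eq_intros refl)+
    moreover have "(Z has_vector_derivative - B (- (- t)) ** Z (- t)) (at (- t) within uminus ` {..0})"
      using Z(2)[of "- t"] that by simp
    ultimately have "((Z \<circ> uminus) has_vector_derivative (-1) *\<^sub>R (- B (- (- t)) ** Z (- t)))
        (at t within {..0})"
      by (rule vector_diff_chain_within)
    then show ?thesis
      by (simp add: o_def bounded_bilinear.minus_left[OF bounded_bilinear_matrix_matrix_mult])
  qed
  then show ?thesis using Z(1) by (intro exI[of _ "\<lambda>s. Z (- s)"]) auto
qed

lemma matrix_ode_exists: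
  fixes B :: "real \<Rightarrow> real^'n^'n"
  assumes B: "continuous_on UNIV B"
  shows "\<exists>Y. Y 0 = mat 1 \<and> (\<forall>t. (Y has_vector_derivative B t ** Y t) (at t))"
proof -
  obtain Y\<^sub>r where Y\<^sub>r: "Y\<^sub>r 0 = mat 1"
      "\<And>t. t \<ge> 0 \<Longrightarrow> (Y\<^sub>r has_vector_derivative B t ** Y\<^sub>r t) (at t within {0..})"
    using matrix_ode_exists_atLeast[of B] B by (meson continuous_on_subset subset_UNIV)
  obtain Y\<^sub>l where Y\<^sub>l: "Y\<^sub>l 0 = mat 1"
      "\<And>t. t \<le> 0 \<Longrightarrow> (Y\<^sub>l has_vector_derivative B t ** Y\<^sub>l t) (at t within {..0})"
    using matrix_ode_exists_atMost[of B] B by (meson continuous_on_subset subset_UNIV)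
  define Y where "Y t = (if t \<ge> 0 then Y\<^sub>r t else Y\<^sub>l t)" for t
  have right: "(Y has_vector_derivative B t ** Y t) (at t within {0..})" if "t \<ge> 0" for t
    using has_vector_derivative_transform[OF _ _ Y\<^sub>r(2)[OF that], of Y] that by (simp add: Y_def)
  have Y_left: "Y t = Y\<^sub>l t" if "t \<le> 0" for t
    using that Y\<^sub>r(1) Y\<^sub>l(1) by (simp add: Y_def)
  have left: "(Y has_vector_derivative B t ** Y t) (at t within {..0})" if "t \<le> 0" for t
    using has_vector_derivative_transform[OF _ Y_left Y\<^sub>l(2)[OF that]] that by (simp add: Y_left)
  have "(Y has_vector_derivative B t ** Y t) (at t)" for t
  proof (cases t "0 :: real" rule: linorder_cases)
    case less
    then show ?thesis using left[of t] at_within_interior[of t "{..0}"] by simp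
  next
    case equal
    have "{0::real..} \<union> {..0} = UNIV" by auto
    then show ?thesis using has_vector_derivative_within_Un[OF right left, of t] equal by simp
  next
    case greater
    then show ?thesis using right[of t] at_within_interior[of t "{0..}"] by simp
  qed
  moreover have "Y 0 = mat 1" using Y\<^sub>r by (simp add: Y_def)
  ultimately show ?thesis by blast
qed

lemma bounded_linear_transpose: "bounded_linear (transpose :: 'a::{euclidean_space,real_algebra_1}^'n^'m \<Rightarrow> 'a^'m^'n)"
proof -
  have "linear (transpose :: 'a^'n^'m \<Rightarrow> 'a^'m^'n)"
    by (rule linearI) (simp_all add: transpose_def vec_eq_iff)
  then show ?thesis by (simp add: linear_conv_bounded_linear)
qed

lemma transpose_uminus: "transpose (- A) = - transpose A"
  by (simp add: transpose_def vec_eq_iff)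

locale linear_matrix_ode =
  fixes B :: "real \<Rightarrow> real^'n^'n"
  assumes continuous_coefficient: "continuous_on UNIV B"
begin

lemma adjoint_solution_exists:
  "\<exists>W. W 0 = mat 1 \<and> (\<forall>t. (W has_vector_derivative - (W t ** B t)) (at t))"
proof -
  have "continuous_on UNIV (\<lambda>t. - transpose (B t))"
    by (intro continuous_intros bounded_linear.continuous_on[OF bounded_linear_transpose]
        continuous_coefficient)
  then obtain V where V: "V 0 = mat 1" "\<And>t. (V has_vector_derivative - transpose (B t) ** V t) (at t)"
    using matrix_ode_exists by blast
  from bounded_linear.has_vector_derivative[OF bounded_linear_transpose V(2)]
  have "((\<lambda>t. transpose (V t)) has_vector_derivative - (transpose (V t) ** B t)) (at t)" for t
    by (simp add: bounded_bilinear.minus_left[OF bounded_bilinear_matrix_matrix_mult]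
        transpose_uminus matrix_transpose_mul)
  then show ?thesis using V(1) by (intro exI[of _ "\<lambda>t. transpose (V t)"]) auto
qed

lemma adjoint_mult_solution_constant:
  assumes W: "\<And>t. (W has_vector_derivative - (W t ** B t)) (at t)"
    and Z: "\<And>t. (Z has_vector_derivative B t ** Z t) (at t)"
  shows "W t ** Z t = W 0 ** Z 0"
proof -
  have "((\<lambda>t. W t ** Z t) has_vector_derivative 0) (at t within UNIV)" for t
    using bounded_bilinear.has_vector_derivative[OF bounded_bilinear_matrix_matrix_mult W[of t] Z[of t]]
    by (simp add: matrix_mul_assoc bounded_bilinear.minus_left[OF bounded_bilinear_matrix_matrix_mult])
  then obtain c where "\<And>t. W t ** Z t = c"
    using has_vector_derivative_zero_constant[of UNIV] by auto
  then show ?thesis by simp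
qed

lemma adjoint_solution_inverse:
  assumes W: "W 0 = mat 1" "\<And>t. (W has_vector_derivative - (W t ** B t)) (at t)"
    and Y: "Y 0 = mat 1" "\<And>t. (Y has_vector_derivative B t ** Y t) (at t)"
  shows "W t ** Y t = mat 1" "Y t ** W t = mat 1"
proof -
  show "W t ** Y t = mat 1"
    using adjoint_mult_solution_constant[OF W(2) Y(2)] W(1) Y(1) by simp
  then show "Y t ** W t = mat 1" by (rule matrix_left_right_inverse[THEN iffD1])
qed

lemma fundamental_solution_eq:
  assumes Y: "Y 0 = mat 1" "\<And>t. (Y has_vector_derivative B t ** Y t) (at t)"
  shows "fundamental_solution B = Y"
  unfolding fundamental_solution_def
proof (rule the_equality)
  show "Y 0 = mat 1 \<and> (\<forall>t. (Y has_vector_derivative B t ** Y t) (at t))" using Y by blast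
  obtain W where W: "W 0 = mat 1" "\<And>t. (W has_vector_derivative - (W t ** B t)) (at t)"
    using adjoint_solution_exists by blast
  fix Z assume Z: "Z 0 = mat 1 \<and> (\<forall>t. (Z has_vector_derivative B t ** Z t) (at t))"
  show "Z = Y"
  proof
    fix t
    have "Z t = (Y t ** W t) ** Z t" by (simp add: adjoint_solution_inverse[OF W Y])
    also have "\<dots> = Y t" using adjoint_solution_inverse[OF W, of Z] Z by (simp add: matrix_mul_assoc[symmetric])
    finally show "Z t = Y t" .
  qed
qed

lemma fundamental_solution:
  "fundamental_solution B 0 = mat 1"
  "(fundamental_solution B has_vector_derivative B t ** fundamental_solution B t) (at t)"
  using fundamental_solution_eq matrix_ode_exists[OF continuous_coefficient] by metis+

lemma continuous_on_fundamental_solution: "continuous_on S (fundamental_solution B)"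
  using fundamental_solution(2)
  by (meson continuous_at_imp_continuous_on has_vector_derivative_continuous)

lemma fundamental_solution_inverse:
  obtains W where "W 0 = mat 1" "\<And>t. (W has_vector_derivative - (W t ** B t)) (at t)"
    "\<And>t. W t ** fundamental_solution B t = mat 1" "\<And>t. fundamental_solution B t ** W t = mat 1"
proof -
  obtain W where "W 0 = mat 1" "\<And>t. (W has_vector_derivative - (W t ** B t)) (at t)"
    using adjoint_solution_exists by blast
  with adjoint_solution_inverse[OF this fundamental_solution] that show thesis by blast
qed

lemma matrix_solution_eq_fundamental:
  assumes Z: "\<And>t. (Z has_vector_derivative B t ** Z t) (at t)"
  shows "Z t = fundamental_solution B t ** Z 0"
proof -
  obtain W where W: "W 0 = mat 1" "\<And>t. (W has_vector_derivative - (W t ** B t)) (at t)"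
    "\<And>t. W t ** fundamental_solution B t = mat 1" "\<And>t. fundamental_solution B t ** W t = mat 1"
    using fundamental_solution_inverse by metis
  have "Z t = (fundamental_solution B t ** W t) ** Z t" by (simp add: W(4))
  also have "\<dots> = fundamental_solution B t ** Z 0"
    using adjoint_mult_solution_constant[OF W(2) Z] W(1) by (simp add: matrix_mul_assoc[symmetric])
  finally show ?thesis .
qed

lemma vector_solution_eq_fundamental:
  assumes z: "\<And>s. s \<in> {0..b} \<Longrightarrow> (z has_vector_derivative cmat (B s) *v z s) (at s within {0..b})"
    and t: "t \<in> {0..b}"
  shows "z t = cmat (fundamental_solution B t) *v z 0"
proof -
  obtain W where W: "W 0 = mat 1" "\<And>t. (W has_vector_derivative - (W t ** B t)) (at t)"
    "\<And>t. W t ** fundamental_solution B t = mat 1" "\<And>t. fundamental_solution B t ** W t = mat 1"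
    using fundamental_solution_inverse by metis
  have "((\<lambda>s. cmat (W s) *v z s) has_vector_derivative 0) (at s within {0..b})" if s: "s \<in> {0..b}" for s
  proof -
    have "((\<lambda>s. cmat (W s)) has_vector_derivative cmat (- (W s ** B s))) (at s within {0..b})"
      using bounded_linear.has_vector_derivative[OF bounded_linear_cmat
          has_vector_derivative_at_within[OF W(2)]] .
    from bounded_bilinear.has_vector_derivative[OF bounded_bilinear_matrix_vector_mult this z[OF s]]
    show ?thesis
      by (simp add: cmat_uminus cmat_mult matrix_vector_mul_assoc
          bounded_bilinear.minus_left[OF bounded_bilinear_matrix_vector_mult])
  qed
  then obtain c where "\<And>s. s \<in> {0..b} \<Longrightarrow> cmat (W s) *v z s = c"
    using has_vector_derivative_zero_constant[of "{0..b}"] by auto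
  then have "cmat (W t) *v z t = z 0"
    using t W(1) by (force simp: cmat_mat_1)
  then show ?thesis using cmat_mult_inverse_cancel[OF W(4)] by metis
qed

lemma fundamental_solution_matrix_inv:
  "fundamental_solution B t ** matrix_inv (fundamental_solution B t) = mat 1"
  "continuous_on S (\<lambda>t. matrix_inv (fundamental_solution B t))"
proof -
  obtain W where W: "\<And>t. (W has_vector_derivative - (W t ** B t)) (at t)"
    "\<And>t. W t ** fundamental_solution B t = mat 1" "\<And>t. fundamental_solution B t ** W t = mat 1"
    using fundamental_solution_inverse by metis
  have "matrix_inv (fundamental_solution B t) = W t" for t
  proof -
    let ?Y = "fundamental_solution B t"
    have inv: "matrix_inv ?Y ** ?Y = mat 1"
      using someI[of "\<lambda>A'. ?Y ** A' = mat 1 \<and> A' ** ?Y = mat 1" "W t"] W(2,3)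
      unfolding matrix_inv_def by blast
    have "matrix_inv ?Y = (matrix_inv ?Y ** ?Y) ** W t"
      by (simp add: matrix_mul_assoc[symmetric] W(3))
    also have "\<dots> = W t" by (simp add: inv)
    finally show ?thesis .
  qed
  moreover have "continuous_on S W"
    using W(1) by (meson continuous_at_imp_continuous_on has_vector_derivative_continuous)
  ultimately show "fundamental_solution B t ** matrix_inv (fundamental_solution B t) = mat 1"
    "continuous_on S (\<lambda>t. matrix_inv (fundamental_solution B t))"
    using W(3) by simp_all
qed

lemma variation_of_constants:
  fixes c :: "complex^'n" and g :: "real \<Rightarrow> complex^'n"
  assumes g: "continuous_on {0..b} g" and t: "t \<in> {0..b}"
  defines "u \<equiv> \<lambda>t. cmat (fundamental_solution B t) *v
    (c + integral {0..t} (\<lambda>s. cmat (matrix_inv (fundamental_solution B s)) *v g s))"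
  shows "(u has_vector_derivative cmat (B t) *v u t + g t) (at t within {0..b})"
proof -
  let ?Y = "fundamental_solution B" and ?W = "\<lambda>s. matrix_inv (fundamental_solution B s)"
  have dY: "((\<lambda>t. cmat (?Y t)) has_vector_derivative cmat (B t ** ?Y t)) (at t within {0..b})"
    using bounded_linear.has_vector_derivative[OF bounded_linear_cmat
        has_vector_derivative_at_within[OF fundamental_solution(2)]] .
  have "continuous_on {0..b} (\<lambda>s. cmat (?W s) *v g s)"
    by (intro bounded_bilinear.continuous_on[OF bounded_bilinear_matrix_vector_mult _ g]
        bounded_linear.continuous_on[OF bounded_linear_cmat] fundamental_solution_matrix_inv)
  then have dI: "((\<lambda>t. c + integral {0..t} (\<lambda>s. cmat (?W s) *v g s)) has_vector_derivative
      cmat (?W t) *v g t) (at t within {0..b})"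
    using has_vector_derivative_add[OF has_vector_derivative_const integral_has_vector_derivative] t
    by fastforce
  from bounded_bilinear.has_vector_derivative[OF bounded_bilinear_matrix_vector_mult dY dI]
  show ?thesis
    unfolding u_def
    by (simp add: cmat_mult matrix_vector_mul_assoc[symmetric] add.commute
        cmat_mult_inverse_cancel[OF fundamental_solution_matrix_inv(1)])
qed

end

section \<open>The delay equation\<close>

lemma agreeing_sequence_glue:
  fixes h :: "nat \<Rightarrow> real \<Rightarrow> 'a" and T :: real
  assumes T: "T > 0" and agree: "\<And>n t. t \<le> real n * T \<Longrightarrow> h (Suc n) t = h n t"
  obtains y where "\<And>n t. t \<le> real n * T \<Longrightarrow> y t = h n t"
proof
  have mono_agree: "h m t = h n t" if "n \<le> m" "t \<le> real n * T" for n m t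
    using that(1)
  proof (induction m rule: dec_induct)
    case (step m)
    have "real n * T \<le> real m * T" using step(1) T by (intro mult_right_mono) auto
    then show ?case using agree[of t m] step that(2) by simp
  qed simp
  define N where "N t = (LEAST n. t \<le> real n * T)" for t
  have N: "t \<le> real (N t) * T" for t
    unfolding N_def by (rule LeastI_ex) (use reals_Archimedean3[OF T] in \<open>meson less_imp_le\<close>)
  fix n t assume t: "t \<le> real n * T"
  then have "N t \<le> n" unfolding N_def by (rule Least_le)
  then show "h (N t) t = h n t" using mono_agree N by simp
qed

locale delay_equation =
  fixes A :: "real \<Rightarrow> real^'n^'n" and K :: "real^'n^'n" and T :: real
  assumes continuous_A: "continuous_on UNIV A" and T_pos: "T > 0"
begin

sublocale A_ode: linear_matrix_ode A
  by unfold_locales (rule continuous_A)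

sublocale AK_ode: linear_matrix_ode "\<lambda>t. A t + K"
  by unfold_locales (intro continuous_intros continuous_A)

lemma zero_history_solution_vanishes:
  fixes d :: "real \<Rightarrow> complex^'n"
  assumes history: "\<And>t. t \<le> 0 \<Longrightarrow> d t = 0"
    and eq: "\<And>t. t \<ge> 0 \<Longrightarrow>
      (d has_vector_derivative cmat (A t) *v d t + cmat K *v (d t - d (t - T))) (at t within {0..})"
  shows "d t = 0"
proof -
  \<comment> \<open>On [0, (n+1) T] the delayed term vanishes, so d solves d' = (A + K) d with d 0 = 0.\<close>
  have up_to_multiple: "\<forall>t\<in>{0..real n * T}. d t = 0" for n
  proof (induction n)
    case (Suc n)
    let ?R = "real (Suc n) * T"
    have delayed: "d (t - T) = 0" if "t \<in> {0..?R}" for t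
      using history[of "t - T"] Suc.IH that by (cases "t - T \<le> 0") (auto simp: algebra_simps)
    have "(d has_vector_derivative cmat (A t + K) *v d t) (at t within {0..?R})" if t: "t \<in> {0..?R}" for t
      using has_vector_derivative_within_subset[OF eq[of t]] delayed[OF t] t
      by (auto simp: cmat_add matrix_vector_mult_add_rdistrib)
    then have "d t = cmat (fundamental_solution (\<lambda>t. A t + K) t) *v d 0" if "t \<in> {0..?R}" for t
      using that by (rule AK_ode.vector_solution_eq_fundamental)
    then show ?case using history[of 0] by simp
  qed (use history in auto)
  obtain n where "t < real n * T"
    using reals_Archimedean3[OF T_pos] by blast
  then show ?thesis
    using history up_to_multiple[of n] by (cases "t \<le> 0") auto
qed

lemma dde_solution_unique:
  assumes "dde_solution A K T \<phi> y\<^sub>1" "dde_solution A K T \<phi> y\<^sub>2"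
  shows "y\<^sub>1 = y\<^sub>2"
proof
  fix t
  have "y\<^sub>1 t - y\<^sub>2 t = 0"
  proof (rule zero_history_solution_vanishes)
    show "y\<^sub>1 t - y\<^sub>2 t = 0" if "t \<le> 0" for t
      using assms that unfolding dde_solution_def by (cases "t < - T") auto
    fix t :: real assume "t \<ge> 0"
    then have "(y\<^sub>1 has_vector_derivative cmat (A t) *v y\<^sub>1 t + cmat K *v (y\<^sub>1 t - y\<^sub>1 (t - T))) (at t within {0..})"
        "(y\<^sub>2 has_vector_derivative cmat (A t) *v y\<^sub>2 t + cmat K *v (y\<^sub>2 t - y\<^sub>2 (t - T))) (at t within {0..})"
      using assms unfolding dde_solution_def by blast+
    from has_vector_derivative_diff[OF this]
    show "((\<lambda>t. y\<^sub>1 t - y\<^sub>2 t) has_vector_derivative cmat (A t) *v (y\<^sub>1 t - y\<^sub>2 t)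
        + cmat K *v (y\<^sub>1 t - y\<^sub>2 t - (y\<^sub>1 (t - T) - y\<^sub>2 (t - T)))) (at t within {0..})"
      by (simp add: matrix_vector_mult_diff_distrib algebra_simps)
  qed
  then show "y\<^sub>1 t = y\<^sub>2 t" by simp
qed

lemma dde_sol_eq:
  assumes "dde_solution A K T \<phi> y"
  shows "dde_sol A K T \<phi> = y"
  unfolding dde_sol_def using assms dde_solution_unique by blast

(* For t > 0, the solution of y' = (A + K) y - K g(t - T) with y(0) = phi 0, by variation of
   constants; iterating it from phi is the method of steps. *)
definition continuation :: "(real \<Rightarrow> complex^'n) \<Rightarrow> (real \<Rightarrow> complex^'n) \<Rightarrow> real \<Rightarrow> complex^'n" where
  "continuation \<phi> g t = (if t \<le> 0 then \<phi> t else
     cmat (fundamental_solution (\<lambda>t. A t + K) t) *v (\<phi> 0 + integral {0..t}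
       (\<lambda>s. cmat (matrix_inv (fundamental_solution (\<lambda>t. A t + K) s)) *v - (cmat K *v g (s - T)))))"

lemma continuation_nonpos: "t \<le> 0 \<Longrightarrow> continuation \<phi> g t = \<phi> t"
  by (simp add: continuation_def)

lemma continuation_cong:
  assumes "\<And>s. s \<le> R \<Longrightarrow> g s = g' s" "t \<le> R + T"
  shows "continuation \<phi> g t = continuation \<phi> g' t"
proof -
  have "integral {0..t} (\<lambda>s. cmat (matrix_inv (fundamental_solution (\<lambda>t. A t + K) s)) *v - (cmat K *v g (s - T)))
      = integral {0..t} (\<lambda>s. cmat (matrix_inv (fundamental_solution (\<lambda>t. A t + K) s)) *v - (cmat K *v g' (s - T)))"
    using assms by (intro integral_cong) simp
  then show ?thesis by (simp add: continuation_def)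
qed

lemma has_vector_derivative_continuation:
  assumes g: "continuous_on {-T..R} g" and t: "t \<in> {0..R + T}"
  shows "(continuation \<phi> g has_vector_derivative
      cmat (A t) *v continuation \<phi> g t + cmat K *v (continuation \<phi> g t - g (t - T))) (at t within {0..R + T})"
proof -
  have "continuous_on {0..R + T} (\<lambda>s. g (s - T))"
    by (rule continuous_on_compose2[OF g]) (auto intro!: continuous_intros)
  then have "continuous_on {0..R + T} (\<lambda>s. - (cmat K *v g (s - T)))"
    by (intro continuous_intros bounded_linear.continuous_on[OF matrix_vector_mul_bounded_linear])
  define u where "u t = cmat (fundamental_solution (\<lambda>t. A t + K) t) *v (\<phi> 0 + integral {0..t}
       (\<lambda>s. cmat (matrix_inv (fundamental_solution (\<lambda>t. A t + K) s)) *v - (cmat K *v g (s - T))))" for t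
  have u_eq: "continuation \<phi> g s = u s" if "s \<in> {0..R + T}" for s
    using that by (cases "s = 0")
      (simp_all add: continuation_def u_def AK_ode.fundamental_solution(1) cmat_mat_1)
  from AK_ode.variation_of_constants[OF \<open>continuous_on _ (\<lambda>s. - _)\<close> t, of "\<phi> 0"]
  have "(u has_vector_derivative cmat (A t + K) *v u t - cmat K *v g (t - T)) (at t within {0..R + T})"
    unfolding u_def[abs_def] by simp
  then have "(continuation \<phi> g has_vector_derivative
      cmat (A t + K) *v u t - cmat K *v g (t - T)) (at t within {0..R + T})"
    by (rule has_vector_derivative_transform[rotated 2]) (use t u_eq in auto)
  then show ?thesis
    using u_eq[OF t]
    by (simp add: cmat_add matrix_vector_mult_add_rdistrib matrix_vector_mult_diff_distrib add_diff_eq)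
qed

lemma continuous_on_continuation:
  assumes \<phi>: "continuous_on {-T..0} \<phi>" and g: "continuous_on {-T..R} g" and R: "R \<ge> 0"
  shows "continuous_on {-T..R + T} (continuation \<phi> g)"
proof -
  have "continuous_on {0..R + T} (continuation \<phi> g)"
    using has_vector_derivative_continuation[OF g] unfolding has_vector_derivative_def
    by (rule has_derivative_continuous_on)
  moreover have "continuous_on {-T..0} (continuation \<phi> g)"
    using \<phi> by (rule continuous_on_eq) (simp add: continuation_nonpos)
  moreover have "{-T..0} \<union> {0..R + T} = {-T..R + T}"
    using T_pos R by (intro ivl_disj_un_two_touch) auto
  ultimately show ?thesis by (metis continuous_on_closed_Un closed_atLeastAtMost)
qed

lemma dde_solution_glue:
  assumes \<phi>_out: "\<And>t. t \<notin> {-T..0} \<Longrightarrow> \<phi> t = 0"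
    and history: "\<And>n t. t \<le> 0 \<Longrightarrow> h n t = \<phi> t"
    and agree: "\<And>n t. t \<le> real n * T \<Longrightarrow> h (Suc n) t = h n t"
    and cont: "\<And>n. continuous_on {-T..real n * T} (h n)"
    and deriv: "\<And>n t. t \<in> {0..real (Suc n) * T} \<Longrightarrow> (h (Suc n) has_vector_derivative
      cmat (A t) *v h (Suc n) t + cmat K *v (h (Suc n) t - h n (t - T))) (at t within {0..real (Suc n) * T})"
  shows "\<exists>y. dde_solution A K T \<phi> y"
proof -
  obtain y where y: "\<And>n t. t \<le> real n * T \<Longrightarrow> y t = h n t"
    using agreeing_sequence_glue[where h = h, OF T_pos agree] by blast
  have "dde_solution A K T \<phi> y"
    unfolding dde_solution_def
  proof (intro conjI allI impI ballI)
    show "y t = 0" if "t < - T" for t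
      using that y[of t 0] history \<phi>_out T_pos by simp
    show "y t = \<phi> t" if "t \<in> {-T..0}" for t
      using that y[of t 0] history by simp
    show "continuous_on {-T..} y"
    proof (rule continuous_on_atLeastI)
      fix b assume "b > - T"
      obtain n where n: "b < real n * T" using reals_Archimedean3[OF T_pos] by blast
      have "continuous_on {-T..b} (h n)"
        using cont by (rule continuous_on_subset) (use n in auto)
      then show "continuous_on {-T..b} y"
        by (rule continuous_on_eq) (use y[of _ n] n in force)
    qed
    fix t :: real assume t: "t \<ge> 0"
    obtain m where "t < real m * T" using reals_Archimedean3[OF T_pos] by blast
    then obtain n where n: "t < real (Suc n) * T"
      using t T_pos by (cases m) auto
    let ?R = "real (Suc n) * T"
    have "(y has_vector_derivative cmat (A t) *v h (Suc n) t + cmat K *v (h (Suc n) t - h n (t - T)))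
        (at t within {0..?R})"
      by (rule has_vector_derivative_transform[OF _ _ deriv]) (use t n y in auto)
    moreover have "y t = h (Suc n) t" "y (t - T) = h n (t - T)"
      using y n by (auto simp: algebra_simps)
    ultimately show "(y has_vector_derivative cmat (A t) *v y t + cmat K *v (y t - y (t - T))) (at t within {0..})"
      using at_within_Icc_eq_atLeast[of 0 t ?R] t n by simp
  qed
  then show ?thesis by blast
qed

lemma dde_solution_exists:
  assumes \<phi>: "\<phi> \<in> phase_space T"
  shows "\<exists>y. dde_solution A K T \<phi> y"
proof -
  have \<phi>_cont: "continuous_on {-T..0} \<phi>" and \<phi>_out: "\<And>t. t \<notin> {-T..0} \<Longrightarrow> \<phi> t = 0"
    using \<phi> unfolding phase_space_def by auto
  define h where "h n = (continuation \<phi> ^^ n) \<phi>" for n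
  have history: "h n t = \<phi> t" if "t \<le> 0" for n t
    using that by (cases n) (simp_all add: h_def continuation_nonpos)
  have h_Suc: "h (Suc n) = continuation \<phi> (h n)" for n
    by (simp add: h_def)
  have agree: "h (Suc n) t = h n t" if "t \<le> real n * T" for n t
    using that
  proof (induction n arbitrary: t)
    case (Suc n)
    then show ?case
      unfolding h_Suc[of "Suc n"] h_Suc[of n]
      by (intro continuation_cong[of "real n * T"]) (auto simp: algebra_simps)
  qed (simp add: history)
  have cont: "continuous_on {-T..real n * T} (h n)" for n
  proof (induction n)
    case (Suc n)
    then show ?case
      using continuous_on_continuation[OF \<phi>_cont Suc] T_pos by (simp add: h_Suc algebra_simps)
  qed (simp add: h_def \<phi>_cont)
  have "(h (Suc n) has_vector_derivative
      cmat (A t) *v h (Suc n) t + cmat K *v (h (Suc n) t - h n (t - T))) (at t within {0..real (Suc n) * T})"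
    if "t \<in> {0..real (Suc n) * T}" for n t
    using has_vector_derivative_continuation[OF cont, of t n \<phi>] that by (simp add: h_Suc algebra_simps)
  then show ?thesis
    using dde_solution_glue[OF \<phi>_out history agree cont] by blast
qed

end

section \<open>Eigenfunctions for the multiplier 1\<close>

definition periodic_history :: "(real \<Rightarrow> real^'n^'n) \<Rightarrow> real \<Rightarrow> complex^'n \<Rightarrow> real \<Rightarrow> complex^'n" where
  "periodic_history A T v = (\<lambda>\<theta>. if \<theta> \<in> {-T..0} then cmat (fundamental_solution A \<theta>) *v v else 0)"

locale periodic_delay_equation = delay_equation +
  assumes A_periodic: "\<And>t. A (t + T) = A t"
begin

lemma fundamental_solution_shift:
  "fundamental_solution A (t + T) = fundamental_solution A t ** monodromy_matrix A T"
proof -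
  have "((\<lambda>t. fundamental_solution A (t + T)) has_vector_derivative A t ** fundamental_solution A (t + T)) (at t)"
    for t
  proof -
    have "((\<lambda>t. t + T) has_vector_derivative 1) (at t)"
      by (rule derivative_eq_intros refl)+ simp
    from vector_diff_chain_at[OF this A_ode.fundamental_solution(2)[of "t + T"]] show ?thesis
      by (simp add: o_def A_periodic)
  qed
  from A_ode.matrix_solution_eq_fundamental[OF this] show ?thesis
    by (simp add: monodromy_matrix_def)
qed

lemma periodic_history_shift:
  assumes "v \<in> matrix_eigenspace (monodromy_matrix A T) 1"
  shows "cmat (fundamental_solution A (t + T)) *v v = cmat (fundamental_solution A t) *v v"
  using assms
  by (simp add: matrix_eigenspace_def fundamental_solution_shift cmat_mult matrix_vector_mul_assoc[symmetric])

lemma periodic_history_mem_phase_space: "periodic_history A T v \<in> phase_space T"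
  unfolding phase_space_def periodic_history_def
  by (auto intro!: continuous_on_eq[OF bounded_bilinear.continuous_on[OF bounded_bilinear_matrix_vector_mult
        bounded_linear.continuous_on[OF bounded_linear_cmat A_ode.continuous_on_fundamental_solution]
        continuous_on_const]])

lemma periodic_history_mem_operator_eigenspace:
  assumes v: "v \<in> matrix_eigenspace (monodromy_matrix A T) 1"
  shows "periodic_history A T v \<in> operator_eigenspace T (dde_solution_operator A K T T) 1"
proof -
  let ?Yv = "\<lambda>t. cmat (fundamental_solution A t) *v v"
  define y where "y t = (if t < -T then 0 else ?Yv t)" for t
  have Yv_deriv: "(?Yv has_vector_derivative cmat (A t) *v ?Yv t) (at t)" for t
    using bounded_bilinear.has_vector_derivative[OF bounded_bilinear_matrix_vector_mult
        bounded_linear.has_vector_derivative[OF bounded_linear_cmat A_ode.fundamental_solution(2)]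
        has_vector_derivative_const]
    by (simp add: cmat_mult matrix_vector_mul_assoc)
  have "dde_solution A K T (periodic_history A T v) y"
    unfolding dde_solution_def
  proof (intro conjI allI impI ballI)
    have "continuous_on UNIV ?Yv"
      using Yv_deriv by (meson continuous_at_imp_continuous_on has_vector_derivative_continuous)
    then show "continuous_on {-T..} y"
      by (rule continuous_on_eq[OF continuous_on_subset]) (auto simp: y_def)
    fix t :: real assume t: "t \<ge> 0"
    have "(y has_vector_derivative cmat (A t) *v ?Yv t) (at t within {0..})"
      by (rule has_vector_derivative_transform[OF _ _ has_vector_derivative_at_within[OF Yv_deriv]])
        (use t T_pos in \<open>auto simp: y_def\<close>)
    moreover have "y (t - T) = y t"
      using t T_pos periodic_history_shift[OF v, of "t - T"] by (simp add: y_def)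
    ultimately show "(y has_vector_derivative cmat (A t) *v y t + cmat K *v (y t - y (t - T))) (at t within {0..})"
      using t T_pos by (simp add: y_def)
  qed (auto simp: y_def periodic_history_def)
  then have "dde_solution_operator A K T T (periodic_history A T v) \<theta> = periodic_history A T v \<theta>" for \<theta>
    using T_pos periodic_history_shift[OF v, of \<theta>]
    by (simp add: dde_solution_operator_def dde_sol_eq y_def periodic_history_def add.commute)
  then have "dde_solution_operator A K T T (periodic_history A T v) = periodic_history A T v" ..
  then show ?thesis
    using periodic_history_mem_phase_space
    by (simp add: operator_eigenspace_def fscale_def)
qed

lemma operator_eigenvector_eq_periodic_history:
  assumes \<phi>: "\<phi> \<in> operator_eigenspace T (dde_solution_operator A K T T) 1"
  shows "\<phi> 0 \<in> matrix_eigenspace (monodromy_matrix A T) 1" "\<phi> = periodic_history A T (\<phi> 0)"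
proof -
  have \<phi>_phase: "\<phi> \<in> phase_space T"
    and \<phi>_fixed: "\<phi> = dde_solution_operator A K T T \<phi>"
    using \<phi> unfolding operator_eigenspace_def fscale_def by auto
  obtain y where y: "dde_solution A K T \<phi> y"
    using dde_solution_exists[OF \<phi>_phase] by blast
  have y_history: "y t = \<phi> t" if "t \<in> {-T..0}" for t
    using y that unfolding dde_solution_def by blast
  have \<phi>_y: "\<phi> \<theta> = y (T + \<theta>)" if "\<theta> \<in> {-T..0}" for \<theta>
    using fun_cong[OF \<phi>_fixed, of \<theta>] that by (simp add: dde_solution_operator_def dde_sol_eq[OF y])
  have "(y has_vector_derivative cmat (A t) *v y t) (at t within {0..T})" if t: "t \<in> {0..T}" for t
  proof -
    have "y (t - T) = y t" using y_history[of "t - T"] \<phi>_y[of "t - T"] t by simp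
    then show ?thesis
      using y t has_vector_derivative_within_subset[of y _ t "{0..}" "{0..T}"]
      unfolding dde_solution_def by auto
  qed
  then have "y t = cmat (fundamental_solution A t) *v y 0" if "t \<in> {0..T}" for t
    using that by (rule A_ode.vector_solution_eq_fundamental)
  then have y_Y: "y t = cmat (fundamental_solution A t) *v \<phi> 0" if "t \<in> {0..T}" for t
    using that y_history[of 0] T_pos by simp
  show eigen: "\<phi> 0 \<in> matrix_eigenspace (monodromy_matrix A T) 1"
    using y_Y[of T] \<phi>_y[of 0] T_pos by (simp add: matrix_eigenspace_def monodromy_matrix_def)
  show "\<phi> = periodic_history A T (\<phi> 0)"
  proof
    fix \<theta>
    show "\<phi> \<theta> = periodic_history A T (\<phi> 0) \<theta>"
    proof (cases "\<theta> \<in> {-T..0}")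
      case True
      then show ?thesis
        using \<phi>_y y_Y[of "T + \<theta>"] periodic_history_shift[OF eigen, of \<theta>]
        by (simp add: periodic_history_def add.commute)
    next
      case False
      then show ?thesis
        using \<phi>_phase by (auto simp: phase_space_def periodic_history_def)
    qed
  qed
qed

lemma operator_eigenspace_eq_image:
  "operator_eigenspace T (dde_solution_operator A K T T) 1
    = periodic_history A T ` matrix_eigenspace (monodromy_matrix A T) 1"
  using periodic_history_mem_operator_eigenspace operator_eigenvector_eq_periodic_history by blast


lemma inj_periodic_history: "inj (periodic_history A T)"
proof (rule injI)
  fix v w assume "periodic_history A T v = periodic_history A T w"
  then have "periodic_history A T v 0 = periodic_history A T w 0" by simp
  then show "v = w"
    using T_pos by (simp add: periodic_history_def A_ode.fundamental_solution(1) cmat_mat_1)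
qed

end

lemma vector_space_fscale: "vector_space (fscale :: complex \<Rightarrow> (real \<Rightarrow> complex^'n) \<Rightarrow> _)"
  by unfold_locales (auto simp: fscale_def fun_eq_iff vector_add_ldistrib vector_sadd_rdistrib)

lemma linear_periodic_history: "Vector_Spaces.linear (*s) fscale (periodic_history A T)"
proof -
  have "periodic_history A T (x + y) = periodic_history A T x + periodic_history A T y" for x y
    by (auto simp: periodic_history_def fun_eq_iff matrix_vector_right_distrib)
  moreover have "periodic_history A T (c *s x) = fscale c (periodic_history A T x)" for c x
    by (auto simp: periodic_history_def fscale_def fun_eq_iff vec_eq_iff matrix_vector_mult_def
        sum_distrib_left mult.left_commute)
  ultimately show ?thesis
    using vector_space_fscale vec.vector_space_axioms unfolding Vector_Spaces.linear_iff by blast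
qed

lemma dim_image_injective_linear:
  fixes scale :: "complex \<Rightarrow> 'b::ab_group_add \<Rightarrow> 'b" and L :: "complex^'n \<Rightarrow> 'b"
  assumes scale: "vector_space scale" and L: "Vector_Spaces.linear (*s) scale L" "inj L"
  shows "vector_space.dim scale (L ` E) = vec.dim E"
    and "\<exists>B. finite B \<and> L ` E \<subseteq> module.span scale B"
proof -
  interpret finite_dimensional_vector_space_pair_1 "(*s)" "cart_basis :: (complex^'n) set" scale
    by (intro finite_dimensional_vector_space_pair_1.intro scale) unfold_locales
  interpret L: Vector_Spaces.linear "(*s)" scale L by (rule L(1))
  show "vector_space.dim scale (L ` E) = vec.dim E"
    using dim_image_eq[OF L(1)] L(2) by (meson inj_on_subset subset_UNIV)
  have "L ` E \<subseteq> L ` vec.span cart_basis"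
    using vec.span_superset by (auto simp: span_cart_basis)
  also have "\<dots> = module.span scale (L ` cart_basis)"
    using L.span_image[of cart_basis] by simp
  finally show "\<exists>B. finite B \<and> L ` E \<subseteq> module.span scale B"
    using finite_cart_basis by blast
qed

lemma continuous_on_linearization:
  fixes Df :: "((real^'n) \<times> real) \<Rightarrow> ((real^'n) \<times> real) \<Rightarrow>\<^sub>L (real^'m)"
  assumes Df: "continuous_on UNIV Df" and xs: "continuous_on UNIV xs"
  shows "continuous_on UNIV (\<lambda>t. matrix (\<lambda>v. blinfun_apply (Df (xs t, t)) (v, 0)))"
proof -
  have "continuous_on UNIV (\<lambda>t. Df (xs t, t))"
    by (rule continuous_on_compose2[OF Df]) (auto intro!: continuous_intros xs)
  then have "continuous_on UNIV (\<lambda>t. blinfun_apply (Df (xs t, t)) (axis j 1, 0))" for j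
    by (rule bounded_bilinear.continuous_on[OF bounded_bilinear_blinfun_apply]) (rule continuous_on_const)
  then show ?thesis
    unfolding matrix_def by (intro continuous_on_vec_lambda continuous_on_component)
qed

lemma partial_derivative_periodic:
  fixes f :: "'a::real_normed_vector \<Rightarrow> real \<Rightarrow> 'b::real_normed_vector"
  assumes f_deriv: "\<And>z. ((\<lambda>(x, t). f x t) has_derivative blinfun_apply (Df z)) (at z)"
    and f_periodic: "\<And>x t. f x (t + T) = f x t"
  shows "blinfun_apply (Df (x, t + T)) (v, 0) = blinfun_apply (Df (x, t)) (v, 0)"
proof -
  have partial: "((\<lambda>y. f y s) has_derivative (\<lambda>v. blinfun_apply (Df (x, s)) (v, 0))) (at x)" for s
    using has_derivative_compose[OF has_derivative_Pair[OF has_derivative_ident has_derivative_const]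
        f_deriv[of "(x, s)"]]
    by simp
  have "(\<lambda>v. blinfun_apply (Df (x, t + T)) (v, 0)) = (\<lambda>v. blinfun_apply (Df (x, t)) (v, 0))"
    using partial[of "t + T"] partial[of t] f_periodic by (simp add: has_derivative_unique)
  then show ?thesis by meson
qed

theorem theorem1:
  fixes f :: "real^'n \<Rightarrow> real \<Rightarrow> real^'n"
    and Df :: "((real^'n) \<times> real) \<Rightarrow> (((real^'n) \<times> real) \<Rightarrow>\<^sub>L (real^'n))"
    and T :: real
    and xs :: "real \<Rightarrow> real^'n"
    and K :: "real^'n^'n"
  assumes f_deriv: "\<And>z. ((\<lambda>(x, t). f x t) has_derivative blinfun_apply (Df z)) (at z)"
    and f_C1: "continuous_on UNIV Df"
    and T_pos: "T > 0"
    and f_periodic: "\<And>x t. f x (t + T) = f x t"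
    and xs_solution: "\<And>t. (xs has_vector_derivative f (xs t) t) (at t)"
    and xs_periodic: "\<And>t. xs (t + T) = xs t"
  defines "A \<equiv> (\<lambda>t. matrix (\<lambda>v. blinfun_apply (Df (xs t, t)) (v, 0)))"
  shows "(\<exists>B. finite B \<and> operator_eigenspace T (dde_solution_operator A K T T) 1 \<subseteq> module.span fscale B)
       \<and> geom_mult_matrix (monodromy_matrix A T) 1
           = geom_mult_operator T (dde_solution_operator A K T T) 1"
proof -
  have "continuous_on UNIV xs"
    using xs_solution by (meson continuous_at_imp_continuous_on has_vector_derivative_continuous)
  then have "continuous_on UNIV A"
    unfolding A_def using continuous_on_linearization[OF f_C1] by blast
  moreover have "A (t + T) = A t" for t
    unfolding A_def using partial_derivative_periodic[OF f_deriv f_periodic] by (simp add: xs_periodic)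
  ultimately interpret periodic_delay_equation A K T
    using T_pos by unfold_locales
  note dims = dim_image_injective_linear[OF vector_space_fscale linear_periodic_history inj_periodic_history]
  show ?thesis
    unfolding geom_mult_matrix_def geom_mult_operator_def operator_eigenspace_eq_image
    using dims by simp
qed

end
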